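(* Let $G=(V,E)$ be a $2$-edge-strongly biconnected directed graph with $n=|V|$, run Algorithm A (described in the context) on $G$, let $H=(V,U)$ be the minimal $2$-edge-connected spanning subgraph chosen in its step (1), and let $i$ be the number of b-bridges in $H$. Then the edge set $E_{2e}$ of the output of Algorithm A satisfies $|E_{2e}|\leq i(n-1)+5n$.
   Context: A directed graph is strongly biconnected if it is strongly connected and its underlying undirected graph (ignoring edge directions) is biconnected. A strongly biconnected component of a directed graph is a maximal strongly biconnected subgraph. A strongly biconnected directed graph $G=(V,E)$ is $2$-edge-strongly biconnected if it has at least three vertices and $(V,E\setminus\{e\})$ is strongly biconnected for every $e\in E$. For a directed graph $D=(V,F)$, an edge $e\in F$ is a b-bridge if $(V,F\setminus\{e\})$ is not strongly biconnected. A directed graph is $2$-edge-connected if it is strongly connected and remains strongly connected after deleting any single edge. Algorithm A, on input a $2$-edge-strongly biconnected directed graph $G=(V,E)$: (1) Choose $U\subseteq E$ such that $H=(V,U)$ is a minimal $2$-edge-connected spanning subgraph of $G$ (i.e. $H$ is $2$-edge-connected and deleting any edge of $U$ destroys $2$-edge-connectivity). (2) If $H$ is $2$-edge-strongly biconnected, output $H$ (so the output edge set is $E_{2e}=U$) and stop. (3) Otherwise set $E_{2e}:=U$. While the underlying undirected graph of $(V,E_{2e})$ is not biconnected: compute the strongly biconnected components of $(V,E_{2e})$, find an edge $(v,w)\in E\setminus E_{2e}$ such that $v,w$ are not in the same strongly biconnected component of $(V,E_{2e})$, and add $(v,w)$ to $E_{2e}$. (4) Compute the set of b-bridges of $(V,E_{2e})$.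 For each such b-bridge $t$: while the underlying undirected graph of $(V,E_{2e}\setminus\{t\})$ is not biconnected, compute the strongly biconnected components of $(V,E_{2e}\setminus\{t\})$, find an edge $(u,w)\in E\setminus E_{2e}$ such that $u,w$ are not in the same strongly biconnected component of $(V,E_{2e}\setminus\{t\})$, and add $(u,w)$ to $E_{2e}$. (5) Output $(V,E_{2e})$. *)

theory Defs
  imports Main
begin

text \<open>Directed graphs are pairs (V, F) with V a finite vertex set and F a set of
ordered pairs (arcs). Subgraphs are always taken induced on the vertex set given.\<close>

definition restrict :: "'a set \<Rightarrow> ('a \<times> 'a) set \<Rightarrow> ('a \<times> 'a) set" where
  "restrict V F = F \<inter> (V \<times> V)"

definition strongly_connected :: "'a set \<Rightarrow> ('a \<times> 'a) set \<Rightarrow> bool" where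
  "strongly_connected V F \<longleftrightarrow> (\<forall>u\<in>V. \<forall>v\<in>V. (u, v) \<in> (restrict V F)\<^sup>*)"

definition und_connected :: "'a set \<Rightarrow> ('a \<times> 'a) set \<Rightarrow> bool" where
  "und_connected V F \<longleftrightarrow>
     (\<forall>u\<in>V. \<forall>v\<in>V. (u, v) \<in> (restrict V F \<union> (restrict V F)\<inverse>)\<^sup>*)"

definition und_biconnected :: "'a set \<Rightarrow> ('a \<times> 'a) set \<Rightarrow> bool" where
  "und_biconnected V F \<longleftrightarrow> und_connected V F \<and> (\<forall>x\<in>V. und_connected (V - {x}) F)"

definition strongly_biconnected :: "'a set \<Rightarrow> ('a \<times> 'a) set \<Rightarrow> bool" where
  "strongly_biconnected V F \<longleftrightarrow> strongly_connected V F \<and> und_biconnected V F"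

definition two_edge_strongly_biconnected :: "'a set \<Rightarrow> ('a \<times> 'a) set \<Rightarrow> bool" where
  "two_edge_strongly_biconnected V F \<longleftrightarrow>
     strongly_biconnected V F \<and> card V \<ge> 3 \<and>
     (\<forall>e\<in>F. strongly_biconnected V (F - {e}))"

definition two_edge_connected :: "'a set \<Rightarrow> ('a \<times> 'a) set \<Rightarrow> bool" where
  "two_edge_connected V F \<longleftrightarrow>
     strongly_connected V F \<and> (\<forall>e\<in>F. strongly_connected V (F - {e}))"

definition b_bridges :: "'a set \<Rightarrow> ('a \<times> 'a) set \<Rightarrow> ('a \<times> 'a) set" where
  "b_bridges V F = {e \<in> F. \<not> strongly_biconnected V (F - {e})}"

definition min_2ec_spanning :: "'a set \<Rightarrow> ('a \<times> 'a) set \<Rightarrow> ('a \<times> 'a) set \<Rightarrow> bool" where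
  "min_2ec_spanning V E U \<longleftrightarrow> U \<subseteq> E \<and> two_edge_connected V U \<and>
     (\<forall>e\<in>U. \<not> two_edge_connected V (U - {e}))"

definition sb_component :: "'a set \<Rightarrow> ('a \<times> 'a) set \<Rightarrow> 'a set \<Rightarrow> ('a \<times> 'a) set \<Rightarrow> bool" where
  "sb_component V F S A \<longleftrightarrow>
     S \<subseteq> V \<and> A \<subseteq> F \<inter> (S \<times> S) \<and> strongly_biconnected S A \<and>
     \<not> (\<exists>S' A'. S' \<subseteq> V \<and> A' \<subseteq> F \<inter> (S' \<times> S') \<and> strongly_biconnected S' A' \<and>
            S \<subseteq> S' \<and> A \<subseteq> A' \<and> (S, A) \<noteq> (S', A'))"

definition same_sbc :: "'a set \<Rightarrow> ('a \<times> 'a) set \<Rightarrow> 'a \<Rightarrow> 'a \<Rightarrow> bool" where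
  "same_sbc V F v w \<longleftrightarrow> (\<exists>S A. sb_component V F S A \<and> v \<in> S \<and> w \<in> S)"

text \<open>One while-loop of steps (3)/(4): starting from edge set X, while the underlying
undirected graph of (V, X - B) is not biconnected, add an edge (v,w) of E - X whose
endpoints are in different strongly biconnected components of (V, X - B); ends in Y.
(Step 3 uses B = {}, step 4 uses B = {t}.)\<close>
inductive aug_loop :: "'a set \<Rightarrow> ('a \<times> 'a) set \<Rightarrow> ('a \<times> 'a) set \<Rightarrow>
                       ('a \<times> 'a) set \<Rightarrow> ('a \<times> 'a) set \<Rightarrow> bool"
  for V E B where
  stop: "und_biconnected V (X - B) \<Longrightarrow> aug_loop V E B X X"
| extend: "\<not> und_biconnected V (X - B) \<Longrightarrow> (v, w) \<in> E - X \<Longrightarrow>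
        \<not> same_sbc V (X - B) v w \<Longrightarrow> aug_loop V E B (insert (v, w) X) Y \<Longrightarrow>
        aug_loop V E B X Y"

inductive step4 :: "'a set \<Rightarrow> ('a \<times> 'a) set \<Rightarrow> ('a \<times> 'a) list \<Rightarrow>
                    ('a \<times> 'a) set \<Rightarrow> ('a \<times> 'a) set \<Rightarrow> bool"
  for V E where
  nil4: "step4 V E [] X X"
| cons4: "aug_loop V E {t} X Y \<Longrightarrow> step4 V E ts Y Z \<Longrightarrow> step4 V E (t # ts) X Z"

definition algA_output :: "'a set \<Rightarrow> ('a \<times> 'a) set \<Rightarrow> ('a \<times> 'a) set \<Rightarrow> ('a \<times> 'a) set \<Rightarrow> bool" where
  "algA_output V E U Out \<longleftrightarrow> min_2ec_spanning V E U \<and>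
     ((two_edge_strongly_biconnected V U \<and> Out = U) \<or>
      (\<not> two_edge_strongly_biconnected V U \<and>
        (\<exists>X3 ts. aug_loop V E {} U X3 \<and> distinct ts \<and> set ts = b_bridges V X3 \<and>
                 step4 V E ts X3 Out)))"

end

theory Submission
  imports Defs "HOL-Library.Product_Order"
begin

(* A minimal 2-edge-connected spanning subgraph U has at most 4(n - 1) arcs (Mader-type
   bound): every arc of U leaves a tight set, i.e. one left by only two arcs; tight sets uncross,
   so charging an arc to its tail or head, according to whether its tight set avoids a fixed root,
   charges every other vertex at most four times.

   If the underlying graph of U is biconnected, step (3) adds nothing, and each of the i loops of
   step (4) adds at most n - 1 arcs. An added arc joins two vertices in different strongly
   biconnected components of the current graph minus the b-bridge t; such vertices are separated
   by a cut vertex x (otherwise ears grown around them would put them into one strongly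
   biconnected subgraph), so the arc merges two components of the graph minus x. Hence it lowers
   the sum over all x of the number of components after deleting x, which is at least n and, the
   graph minus t being connected, at most 2n - 1.

   If the underlying graph of U is not biconnected, every arc of U is a b-bridge, so i = |U| >= n
   and the trivial bound n(n - 1) on the number of arcs suffices. *)

section \<open>Reachability\<close>

definition und_adj :: "'a set \<Rightarrow> ('a \<times> 'a) set \<Rightarrow> ('a \<times> 'a) set" where
  "und_adj W F = restrict W F \<union> (restrict W F)\<inverse>"

lemma restrict_iff: "(x, y) \<in> restrict W F \<longleftrightarrow> (x, y) \<in> F \<and> x \<in> W \<and> y \<in> W"
  unfolding restrict_def by auto

lemma und_adj_iff: "(x, y) \<in> und_adj W F \<longleftrightarrow> ((x, y) \<in> F \<or> (y, x) \<in> F) \<and> x \<in> W \<and> y \<in> W"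
  unfolding und_adj_def restrict_def by auto

lemma und_connected_und_adj:
  "und_connected V F \<longleftrightarrow> (\<forall>u\<in>V. \<forall>v\<in>V. (u, v) \<in> (und_adj V F)\<^sup>*)"
  unfolding und_connected_def und_adj_def by simp

lemma restrict_Int_Times: "P \<subseteq> V \<Longrightarrow> restrict V F \<inter> P \<times> P = restrict P F"
  unfolding restrict_def by auto

lemma rtrancl_restrict_mono:
  "(x, y) \<in> (restrict W F)\<^sup>* \<Longrightarrow> W \<subseteq> W' \<Longrightarrow> F \<subseteq> F' \<Longrightarrow> (x, y) \<in> (restrict W' F')\<^sup>*"
  by (erule rtrancl_mono[THEN subsetD, rotated]) (auto simp: restrict_def)

lemma rtrancl_und_adj_mono:
  "(x, y) \<in> (und_adj W F)\<^sup>* \<Longrightarrow> W \<subseteq> W' \<Longrightarrow> F \<subseteq> F' \<Longrightarrow> (x, y) \<in> (und_adj W' F')\<^sup>*"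
  by (erule rtrancl_mono[THEN subsetD, rotated]) (auto simp: und_adj_iff)

lemma rtrancl_restrict_und_adj:
  "(x, y) \<in> (restrict W F)\<^sup>* \<Longrightarrow> W \<subseteq> W' \<Longrightarrow> F \<subseteq> F' \<Longrightarrow> (x, y) \<in> (und_adj W' F')\<^sup>*"
  by (erule rtrancl_mono[THEN subsetD, rotated]) (auto simp: restrict_def und_adj_iff)

lemma rtrancl_und_adj_sym: "(x, y) \<in> (und_adj W F)\<^sup>* \<Longrightarrow> (y, x) \<in> (und_adj W F)\<^sup>*"
proof -
  have "sym (und_adj W F)" by (auto simp: sym_def und_adj_iff)
  then show "(x, y) \<in> (und_adj W F)\<^sup>* \<Longrightarrow> (y, x) \<in> (und_adj W F)\<^sup>*"
    by (metis sym_rtrancl symD)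
qed

lemma rtrancl_leaves_set:
  assumes "(a, b) \<in> R\<^sup>*" "a \<in> P" "b \<notin> P"
  obtains y y' where "y \<in> P" "y' \<notin> P" "(y, y') \<in> R" "(a, y) \<in> (R \<inter> P \<times> P)\<^sup>*"
proof -
  from assms have "\<exists>y y'. y \<in> P \<and> y' \<notin> P \<and> (y, y') \<in> R \<and> (a, y) \<in> (R \<inter> P \<times> P)\<^sup>*"
  proof (induction rule: converse_rtrancl_induct)
    case (step a z)
    show ?case
    proof (cases "z \<in> P")
      case True
      then obtain y y' where "y \<in> P" "y' \<notin> P" "(y, y') \<in> R" "(z, y) \<in> (R \<inter> P \<times> P)\<^sup>*"
        using step by blast
      moreover have "(a, z) \<in> R \<inter> P \<times> P" using step True by blast
      ultimately show ?thesis by (meson converse_rtrancl_into_rtrancl)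
    qed (use step in blast)
  qed simp
  then show thesis using that by blast
qed

definition und_component :: "'a set \<Rightarrow> ('a \<times> 'a) set \<Rightarrow> 'a \<Rightarrow> 'a set" where
  "und_component W F z = {y. (z, y) \<in> (und_adj W F)\<^sup>*}"

lemma rtrancl_und_adj_in: "(z, y) \<in> (und_adj W F)\<^sup>* \<Longrightarrow> z \<in> W \<Longrightarrow> y \<in> W"
  by (induction rule: rtrancl_induct) (auto simp: und_adj_iff)

lemma und_component_subset: "z \<in> W \<Longrightarrow> und_component W F z \<subseteq> W"
  unfolding und_component_def using rtrancl_und_adj_in[of z _ W F] by auto

lemma und_component_closed:
  "y \<in> und_component W F z \<Longrightarrow> y \<in> W \<Longrightarrow> y' \<in> W \<Longrightarrow> (y, y') \<in> F \<or> (y', y) \<in> F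
    \<Longrightarrow> y' \<in> und_component W F z"
  unfolding und_component_def by (metis mem_Collect_eq rtrancl.rtrancl_into_rtrancl und_adj_iff)

lemma strongly_connected_mono:
  "strongly_connected V F \<Longrightarrow> F \<subseteq> F' \<Longrightarrow> strongly_connected V F'"
  unfolding strongly_connected_def by (meson order_refl rtrancl_restrict_mono)

lemma strongly_connected_imp_und_connected:
  "strongly_connected V F \<Longrightarrow> und_connected V F"
  unfolding strongly_connected_def und_connected_und_adj
  by (meson order_refl rtrancl_restrict_und_adj)

lemma und_connected_mono: "und_connected V F \<Longrightarrow> F \<subseteq> F' \<Longrightarrow> und_connected V F'"
  unfolding und_connected_und_adj by (meson order_refl rtrancl_und_adj_mono)

lemma und_biconnected_mono: "und_biconnected V F \<Longrightarrow> F \<subseteq> F' \<Longrightarrow> und_biconnected V F'"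
  unfolding und_biconnected_def by (meson und_connected_mono)

lemma two_edge_connected_strongly_connected_Diff:
  "two_edge_connected V U \<Longrightarrow> strongly_connected V (U - {f})"
  unfolding two_edge_connected_def by (cases "f \<in> U") auto

lemma two_edge_connected_mono:
  assumes "two_edge_connected V F" "F \<subseteq> F'"
  shows "two_edge_connected V F'"
  unfolding two_edge_connected_def
proof (intro conjI ballI)
  show "strongly_connected V F'"
    using assms by (auto simp: two_edge_connected_def intro: strongly_connected_mono)
  show "strongly_connected V (F' - {e})" for e
    by (rule strongly_connected_mono[OF two_edge_connected_strongly_connected_Diff[OF assms(1)]])
      (use assms(2) in blast)
qed

lemma strongly_connected_arc_out:
  assumes "strongly_connected V F" "X \<subseteq> V" "a \<in> X" "b \<in> V - X"
  shows "\<exists>e\<in>F. fst e \<in> X \<and> snd e \<notin> X"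
proof -
  have "(a, b) \<in> (restrict V F)\<^sup>*" using assms unfolding strongly_connected_def by blast
  then obtain y y' where "y \<in> X" "y' \<notin> X" "(y, y') \<in> restrict V F"
    by (rule rtrancl_leaves_set) (use assms(3,4) in auto)
  then show ?thesis by (force simp: restrict_iff)
qed

section \<open>Minimal 2-edge-connected digraphs\<close>

definition arcs_out :: "('a \<times> 'a) set \<Rightarrow> 'a set \<Rightarrow> ('a \<times> 'a) set" where
  "arcs_out U X = {e \<in> U. fst e \<in> X \<and> snd e \<notin> X}"

definition tight :: "'a set \<Rightarrow> ('a \<times> 'a) set \<Rightarrow> 'a set \<Rightarrow> bool" where
  "tight V U X \<longleftrightarrow> X \<subseteq> V \<and> card (arcs_out U X) \<le> 2"

lemma two_le_card_arcs_out:
  assumes "two_edge_connected V U" "finite U" "X \<subseteq> V" "a \<in> X" "b \<in> V - X"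
  shows "2 \<le> card (arcs_out U X)"
proof -
  have "strongly_connected V U" using assms(1) unfolding two_edge_connected_def by simp
  then obtain e1 where e1: "e1 \<in> U" "fst e1 \<in> X" "snd e1 \<notin> X"
    using strongly_connected_arc_out[OF _ assms(3-5)] by blast
  obtain e2 where e2: "e2 \<in> U - {e1}" "fst e2 \<in> X" "snd e2 \<notin> X"
    using strongly_connected_arc_out[OF two_edge_connected_strongly_connected_Diff[OF assms(1)]
        assms(3-5)]
    by blast
  have "card {e1, e2} \<le> card (arcs_out U X)"
    using e1 e2 assms(2) by (intro card_mono) (auto simp: arcs_out_def)
  moreover have "card {e1, e2} = 2" using e2 by auto
  ultimately show ?thesis by simp
qed

lemma card_arcs_out_Int_Un_le:
  assumes "finite U"
  shows "card (arcs_out U (S \<inter> T)) + card (arcs_out U (S \<union> T))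
    \<le> card (arcs_out U S) + card (arcs_out U T)"
proof -
  have card_eq: "card (arcs_out U X) = (\<Sum>e\<in>U. if fst e \<in> X \<and> snd e \<notin> X then 1 else 0)" for X
    unfolding arcs_out_def using assms by (simp add: sum.If_cases Collect_conj_eq Int_commute)
  show ?thesis
    unfolding card_eq sum.distrib[symmetric] by (rule sum_mono) auto
qed

lemma tight_Int_Un:
  assumes "two_edge_connected V U" "finite U" "tight V U X1" "tight V U X2"
    and "a \<in> X1 \<inter> X2" "b \<in> V - (X1 \<union> X2)"
  shows "tight V U (X1 \<inter> X2)" "tight V U (X1 \<union> X2)"
proof -
  have "X1 \<subseteq> V" "X2 \<subseteq> V" using assms(3,4) by (auto simp: tight_def)
  then have "2 \<le> card (arcs_out U (X1 \<inter> X2))" "2 \<le> card (arcs_out U (X1 \<union> X2))"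
    using assms(5,6) by (auto intro!: two_le_card_arcs_out[OF assms(1,2)])
  then show "tight V U (X1 \<inter> X2)" "tight V U (X1 \<union> X2)"
    using card_arcs_out_Int_Un_le[OF assms(2), of X1 X2] assms(3,4) by (auto simp: tight_def)
qed

text \<open>As \<open>U - {e}\<close> is not 2-edge-connected, some \<open>f\<close> disconnects \<open>U - {e, f}\<close>; the
  vertices reachable from a suitable vertex then form a set left only by \<open>e\<close> and \<open>f\<close>.\<close>
lemma min_2ec_spanning_arc_in_tight:
  assumes "min_2ec_spanning V E U" "U \<subseteq> V \<times> V" "e \<in> U"
  shows "\<exists>X. tight V U X \<and> e \<in> arcs_out U X"
proof -
  have tec: "two_edge_connected V U" and not_tec: "\<not> two_edge_connected V (U - {e})"
    using assms(1,3) unfolding min_2ec_spanning_def by auto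
  moreover have "strongly_connected V (U - {e})"
    using tec by (rule two_edge_connected_strongly_connected_Diff)
  ultimately obtain f where "\<not> strongly_connected V (U - {e} - {f})"
    unfolding two_edge_connected_def by blast
  then obtain a b where ab: "a \<in> V" "b \<in> V" "(a, b) \<notin> (restrict V (U - {e} - {f}))\<^sup>*"
    unfolding strongly_connected_def by blast
  define X where "X = {y \<in> V. (a, y) \<in> (restrict V (U - {e} - {f}))\<^sup>*}"
  have XV: "X \<subseteq> V" and aX: "a \<in> X" and bX: "b \<in> V - X"
    using ab unfolding X_def by auto
  have arcs_ef: "arcs_out U X \<subseteq> {e, f}"
  proof
    fix g assume g: "g \<in> arcs_out U X"
    have "g \<notin> U - {e} - {f}"
    proof
      assume "g \<in> U - {e} - {f}"
      then have "(fst g, snd g) \<in> restrict V (U - {e} - {f})"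
        using g assms(2) XV by (auto simp: arcs_out_def restrict_iff)
      then show False
        using g assms(2) unfolding X_def arcs_out_def by (auto intro: rtrancl_into_rtrancl)
    qed
    then show "g \<in> {e, f}" using g by (auto simp: arcs_out_def)
  qed
  have "card (arcs_out U X) \<le> card {e, f}" using arcs_ef by (rule card_mono[rotated]) simp
  also have "\<dots> \<le> 2" by (simp add: card_insert_if)
  finally have "card (arcs_out U X) \<le> 2" .
  moreover obtain g where "g \<in> U - {f}" "fst g \<in> X" "snd g \<notin> X"
    using strongly_connected_arc_out[OF two_edge_connected_strongly_connected_Diff[OF tec] XV aX bX]
    by blast
  then have "e \<in> arcs_out U X" using arcs_ef by (auto simp: arcs_out_def)
  ultimately show ?thesis using XV unfolding tight_def by blast
qed

lemma card_le_2I: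
  assumes "\<And>x y z. x \<in> A \<Longrightarrow> y \<in> A \<Longrightarrow> z \<in> A \<Longrightarrow> x \<noteq> y \<Longrightarrow> x \<noteq> z \<Longrightarrow> y \<noteq> z \<Longrightarrow> False"
  shows "card A \<le> 2"
proof (rule ccontr)
  assume "\<not> card A \<le> 2"
  then have "3 \<le> card A" by simp
  then obtain T where "T \<subseteq> A" "card T = 3" by (rule obtain_subset_with_card_n)
  then show False using assms by (auto simp: card_3_iff)
qed

text \<open>Tight sets avoiding the root and containing \<open>v\<close> are closed under intersection, so
  three such arcs out of \<open>v\<close> would all leave one tight set.\<close>
lemma card_arcs_from_tight_le:
  assumes "two_edge_connected V U" "finite U" "r \<in> V"
  shows "card {e \<in> U. fst e = v \<and> (\<exists>X. tight V U X \<and> r \<notin> X \<and> e \<in> arcs_out U X)} \<le> 2"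
proof (rule card_le_2I)
  fix e1 e2 e3
  assume e1: "e1 \<in> {e \<in> U. fst e = v \<and> (\<exists>X. tight V U X \<and> r \<notin> X \<and> e \<in> arcs_out U X)}"
    and e2: "e2 \<in> {e \<in> U. fst e = v \<and> (\<exists>X. tight V U X \<and> r \<notin> X \<and> e \<in> arcs_out U X)}"
    and e3: "e3 \<in> {e \<in> U. fst e = v \<and> (\<exists>X. tight V U X \<and> r \<notin> X \<and> e \<in> arcs_out U X)}"
    and distinct: "e1 \<noteq> e2" "e1 \<noteq> e3" "e2 \<noteq> e3"
  from e1 obtain X1 where X1: "tight V U X1" "r \<notin> X1" "e1 \<in> arcs_out U X1" "fst e1 = v" by blast
  from e2 obtain X2 where X2: "tight V U X2" "r \<notin> X2" "e2 \<in> arcs_out U X2" "fst e2 = v" by blast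
  from e3 obtain X3 where X3: "tight V U X3" "r \<notin> X3" "e3 \<in> arcs_out U X3" "fst e3 = v" by blast
  have "tight V U (X1 \<inter> X2)"
    using X1 X2 assms by (intro tight_Int_Un(1)[of V U X1 X2 v r]) (auto simp: arcs_out_def)
  then have "tight V U (X1 \<inter> X2 \<inter> X3)"
    using X1 X2 X3 assms by (intro tight_Int_Un(1)[of V U _ X3 v r]) (auto simp: arcs_out_def)
  moreover have "{e1, e2, e3} \<subseteq> arcs_out U (X1 \<inter> X2 \<inter> X3)"
    using X1 X2 X3 by (auto simp: arcs_out_def)
  then have "card {e1, e2, e3} \<le> card (arcs_out U (X1 \<inter> X2 \<inter> X3))"
    using assms(2) by (intro card_mono) (simp_all add: arcs_out_def)
  ultimately show False using distinct by (simp add: tight_def)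
qed

text \<open>Dually, tight sets containing the root but not \<open>v\<close> are closed under union.\<close>
lemma card_arcs_into_tight_le:
  assumes "two_edge_connected V U" "finite U" "r \<in> V" "v \<in> V"
  shows "card {e \<in> U. snd e = v \<and> (\<exists>X. tight V U X \<and> r \<in> X \<and> e \<in> arcs_out U X)} \<le> 2"
proof (rule card_le_2I)
  fix e1 e2 e3
  assume e1: "e1 \<in> {e \<in> U. snd e = v \<and> (\<exists>X. tight V U X \<and> r \<in> X \<and> e \<in> arcs_out U X)}"
    and e2: "e2 \<in> {e \<in> U. snd e = v \<and> (\<exists>X. tight V U X \<and> r \<in> X \<and> e \<in> arcs_out U X)}"
    and e3: "e3 \<in> {e \<in> U. snd e = v \<and> (\<exists>X. tight V U X \<and> r \<in> X \<and> e \<in> arcs_out U X)}"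
    and distinct: "e1 \<noteq> e2" "e1 \<noteq> e3" "e2 \<noteq> e3"
  from e1 obtain X1 where X1: "tight V U X1" "r \<in> X1" "e1 \<in> arcs_out U X1" "snd e1 = v" by blast
  from e2 obtain X2 where X2: "tight V U X2" "r \<in> X2" "e2 \<in> arcs_out U X2" "snd e2 = v" by blast
  from e3 obtain X3 where X3: "tight V U X3" "r \<in> X3" "e3 \<in> arcs_out U X3" "snd e3 = v" by blast
  have "tight V U (X1 \<union> X2)"
    using X1 X2 assms by (intro tight_Int_Un(2)[of V U X1 X2 r v]) (auto simp: arcs_out_def)
  then have "tight V U (X1 \<union> X2 \<union> X3)"
    using X1 X2 X3 assms by (intro tight_Int_Un(2)[of V U _ X3 r v]) (auto simp: arcs_out_def)
  moreover have "{e1, e2, e3} \<subseteq> arcs_out U (X1 \<union> X2 \<union> X3)"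
    using X1 X2 X3 by (auto simp: arcs_out_def)
  then have "card {e1, e2, e3} \<le> card (arcs_out U (X1 \<union> X2 \<union> X3))"
    using assms(2) by (intro card_mono) (simp_all add: arcs_out_def)
  ultimately show False using distinct by (simp add: tight_def)
qed

lemma card_min_2ec_spanning_le:
  assumes "min_2ec_spanning V E U" "U \<subseteq> V \<times> V" "finite V" "r \<in> V"
  shows "card U \<le> 4 * (card V - 1)"
proof -
  have tec: "two_edge_connected V U" using assms(1) unfolding min_2ec_spanning_def by blast
  have finU: "finite U" using assms(2,3) finite_subset by blast
  define from_v where
    "from_v v = {e \<in> U. fst e = v \<and> (\<exists>X. tight V U X \<and> r \<notin> X \<and> e \<in> arcs_out U X)}" for v
  define into_v where
    "into_v v = {e \<in> U. snd e = v \<and> (\<exists>X. tight V U X \<and> r \<in> X \<and> e \<in> arcs_out U X)}" for v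
  have "U \<subseteq> (\<Union>v\<in>V - {r}. from_v v) \<union> (\<Union>v\<in>V - {r}. into_v v)"
  proof
    fix e assume "e \<in> U"
    then obtain X where "tight V U X" "e \<in> arcs_out U X"
      using min_2ec_spanning_arc_in_tight[OF assms(1,2)] by blast
    then show "e \<in> (\<Union>v\<in>V - {r}. from_v v) \<union> (\<Union>v\<in>V - {r}. into_v v)"
      using \<open>e \<in> U\<close> assms(2) unfolding from_v_def into_v_def arcs_out_def
      by (cases "r \<in> X") force+
  qed
  moreover have "finite ((\<Union>v\<in>V - {r}. from_v v) \<union> (\<Union>v\<in>V - {r}. into_v v))"
    using finU by (rule rev_finite_subset) (auto simp: from_v_def into_v_def)
  ultimately have "card U \<le> card ((\<Union>v\<in>V - {r}. from_v v) \<union> (\<Union>v\<in>V - {r}. into_v v))"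
    by (rule card_mono[rotated])
  also have "\<dots> \<le> card (\<Union>v\<in>V - {r}. from_v v) + card (\<Union>v\<in>V - {r}. into_v v)"
    by (rule card_Un_le)
  also have "\<dots> \<le> (\<Sum>v\<in>V - {r}. card (from_v v)) + (\<Sum>v\<in>V - {r}. card (into_v v))"
    by (intro add_mono card_UN_le) (use assms(3) in auto)
  also have "\<dots> \<le> (\<Sum>v\<in>V - {r}. 2) + (\<Sum>v\<in>V - {r}. 2)"
    unfolding from_v_def into_v_def
    using card_arcs_from_tight_le[OF tec finU assms(4)]
      card_arcs_into_tight_le[OF tec finU assms(4)]
    by (intro add_mono sum_mono) auto
  also have "\<dots> = 4 * (card V - 1)" using assms(3,4) by simp
  finally show ?thesis .
qed

section \<open>Ears\<close>

lemma und_connected_hub: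
  assumes "Q \<subseteq> T" "und_connected Q F" "\<forall>p\<in>T. \<exists>q\<in>Q. (p, q) \<in> (und_adj T F)\<^sup>*"
  shows "und_connected T F"
  unfolding und_connected_und_adj
proof (intro ballI)
  fix p1 p2 assume "p1 \<in> T" "p2 \<in> T"
  then obtain q1 q2 where "q1 \<in> Q" "(p1, q1) \<in> (und_adj T F)\<^sup>*"
    and "q2 \<in> Q" "(p2, q2) \<in> (und_adj T F)\<^sup>*"
    using assms(3) by meson
  moreover have "(q1, q2) \<in> (und_adj T F)\<^sup>*"
    using assms(1,2) \<open>q1 \<in> Q\<close> \<open>q2 \<in> Q\<close> unfolding und_connected_und_adj
    by (meson order_refl rtrancl_und_adj_mono)
  ultimately show "(p1, p2) \<in> (und_adj T F)\<^sup>*" by (meson rtrancl_trans rtrancl_und_adj_sym)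
qed

lemma strongly_connected_hub:
  assumes "\<forall>p\<in>T. (p, h) \<in> (restrict T F)\<^sup>* \<and> (h, p) \<in> (restrict T F)\<^sup>*"
  shows "strongly_connected T F"
  using assms unfolding strongly_connected_def by (meson rtrancl_trans)

lemma und_biconnected_pair:
  assumes "(u, v) \<in> F" "u \<noteq> v"
  shows "und_biconnected {u, v} F"
proof -
  have "(u, v) \<in> und_adj {u, v} F" "(v, u) \<in> und_adj {u, v} F"
    using assms by (auto simp: und_adj_iff)
  then have "und_connected {u, v} F" unfolding und_connected_und_adj by auto
  moreover have "und_connected ({u, v} - {x}) F" if "x \<in> {u, v}" for x
    using that assms(2) unfolding und_connected_def by (auto simp: insert_Diff_if)
  ultimately show ?thesis unfolding und_biconnected_def by blast
qed

definition ear :: "('a \<times> 'a) set \<Rightarrow> 'a set \<Rightarrow> 'a \<Rightarrow> 'a \<Rightarrow> 'a set \<Rightarrow> bool" where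
  "ear F S a b W \<longleftrightarrow> W \<noteq> {} \<and>
    (\<forall>z\<in>W. (a, z) \<in> (restrict (insert a W) F)\<^sup>* \<and> (z, b) \<in> (restrict (insert b W) F)\<^sup>*) \<and>
    (\<forall>x\<in>W. \<forall>z\<in>W - {x}. \<exists>s\<in>S. (z, s) \<in> (und_adj (S \<union> W - {x}) F)\<^sup>*)"

lemma und_biconnected_Un_ear:
  assumes S: "und_biconnected S F" and ab: "a \<in> S" "b \<in> S" "a \<noteq> b" and disj: "S \<inter> W = {}"
    and "ear F S a b W"
  shows "und_biconnected (S \<union> W) F"
  unfolding und_biconnected_def
proof (intro conjI ballI)
  have paths: "\<forall>z\<in>W. (a, z) \<in> (restrict (insert a W) F)\<^sup>* \<and> (z, b) \<in> (restrict (insert b W) F)\<^sup>*"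
    and attached: "\<forall>x\<in>W. \<forall>z\<in>W - {x}. \<exists>s\<in>S. (z, s) \<in> (und_adj (S \<union> W - {x}) F)\<^sup>*"
    using \<open>ear F S a b W\<close> unfolding ear_def by auto
  have to_a: "(p, a) \<in> (und_adj (insert a W) F)\<^sup>*" and to_b: "(p, b) \<in> (und_adj (insert b W) F)\<^sup>*"
    if "p \<in> W" for p
  proof -
    have "(a, p) \<in> (und_adj (insert a W) F)\<^sup>*"
      using paths that by (intro rtrancl_restrict_und_adj[of a p "insert a W" F]) auto
    then show "(p, a) \<in> (und_adj (insert a W) F)\<^sup>*" by (rule rtrancl_und_adj_sym)
    show "(p, b) \<in> (und_adj (insert b W) F)\<^sup>*"
      using paths that by (intro rtrancl_restrict_und_adj[of p b "insert b W" F]) auto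
  qed
  have S_conn: "und_connected S F" and S_conn_Diff: "\<forall>x\<in>S. und_connected (S - {x}) F"
    using S unfolding und_biconnected_def by auto
  show "und_connected (S \<union> W) F"
  proof (rule und_connected_hub[OF _ S_conn])
    show "S \<subseteq> S \<union> W" by blast
    have "(p, b) \<in> (und_adj (S \<union> W) F)\<^sup>*" if "p \<in> W" for p
      by (rule rtrancl_und_adj_mono[OF to_b[OF that]]) (use ab in auto)
    then show "\<forall>p\<in>S \<union> W. \<exists>q\<in>S. (p, q) \<in> (und_adj (S \<union> W) F)\<^sup>*"
      using ab by blast
  qed
  show "und_connected (S \<union> W - {x}) F" if "x \<in> S \<union> W" for x
  proof (cases "x \<in> S")
    case True
    have "\<exists>q\<in>S - {x}. (p, q) \<in> (und_adj (S \<union> W - {x}) F)\<^sup>*" if "p \<in> W" for p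
    proof (cases "x = b")
      case True
      then have "(p, a) \<in> (und_adj (S \<union> W - {x}) F)\<^sup>*"
        by (intro rtrancl_und_adj_mono[OF to_a[OF \<open>p \<in> W\<close>]]) (use ab disj \<open>x \<in> S\<close> in auto)
      then show ?thesis using ab True by blast
    next
      case False
      then have "(p, b) \<in> (und_adj (S \<union> W - {x}) F)\<^sup>*"
        by (intro rtrancl_und_adj_mono[OF to_b[OF \<open>p \<in> W\<close>]]) (use ab disj \<open>x \<in> S\<close> in auto)
      then show ?thesis using ab False by blast
    qed
    then have "\<forall>p\<in>S \<union> W - {x}. \<exists>q\<in>S - {x}. (p, q) \<in> (und_adj (S \<union> W - {x}) F)\<^sup>*"
      by blast
    moreover have "und_connected (S - {x}) F" using S_conn_Diff True by blast
    moreover have "S - {x} \<subseteq> S \<union> W - {x}" by blast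
    ultimately show ?thesis using und_connected_hub by blast
  next
    case False
    then have "x \<in> W" using that by blast
    then have "\<forall>p\<in>S \<union> W - {x}. \<exists>q\<in>S. (p, q) \<in> (und_adj (S \<union> W - {x}) F)\<^sup>*"
      using attached by blast
    moreover have "S \<subseteq> S \<union> W - {x}" using False by blast
    ultimately show ?thesis using und_connected_hub[OF _ S_conn] by blast
  qed
qed

lemma rtrancl_restrict_between:
  assumes "(x, y) \<in> (restrict W F)\<^sup>*" "(y, t) \<in> (restrict W F)\<^sup>*"
  shows "(x, y) \<in> (restrict {q \<in> W. (x, q) \<in> (restrict W F)\<^sup>* \<and> (q, t) \<in> (restrict W F)\<^sup>*} F)\<^sup>*"
  using assms
proof (induction rule: rtrancl_induct)
  case (step y z)
  have yt: "(y, t) \<in> (restrict W F)\<^sup>*"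
    using step(2,4) by (rule converse_rtrancl_into_rtrancl)
  have "(x, z) \<in> (restrict W F)\<^sup>*" using step(1,2) by (rule rtrancl_into_rtrancl)
  then have "(y, z) \<in> restrict {q \<in> W. (x, q) \<in> (restrict W F)\<^sup>* \<and> (q, t) \<in> (restrict W F)\<^sup>*} F"
    using step(1,2,4) yt by (simp add: restrict_iff)
  with step(3)[OF yt] show ?case by (rule rtrancl_into_rtrancl)
qed simp

text \<open>If \<open>Z\<close> is attached to the rest of \<open>W\<close> only through \<open>x\<close>, a path starting outside \<open>Z\<close>
  can skip its detour through \<open>Z\<close>, which both enters and leaves at \<open>x\<close>.\<close>
lemma rtrancl_restrict_bypass:
  assumes Z: "Z \<subseteq> W - {x}" "x \<in> W"
    and closed: "\<forall>y\<in>Z. \<forall>y'\<in>W - {x}. (y, y') \<in> F \<or> (y', y) \<in> F \<longrightarrow> y' \<in> Z"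
    and c: "c \<in> W - Z" and path: "(c, y) \<in> (restrict W F)\<^sup>*"
  shows "(y \<notin> Z \<longrightarrow> (c, y) \<in> (restrict (W - Z) F)\<^sup>*) \<and> (y \<in> Z \<longrightarrow> (c, x) \<in> (restrict (W - Z) F)\<^sup>*)"
  using path
proof (induction rule: rtrancl_induct)
  case (step y z)
  have yz: "(y, z) \<in> F" "y \<in> W" "z \<in> W" using step(2) by (auto simp: restrict_iff)
  show ?case
  proof (intro conjI impI)
    assume "z \<notin> Z"
    show "(c, z) \<in> (restrict (W - Z) F)\<^sup>*"
    proof (cases "y \<in> Z")
      case False
      then have "(y, z) \<in> restrict (W - Z) F" using \<open>z \<notin> Z\<close> yz by (simp add: restrict_iff)
      with step(3) False show ?thesis by (blast intro: rtrancl_into_rtrancl)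
    next
      case True
      then have "z = x" using closed yz \<open>z \<notin> Z\<close> by blast
      then show ?thesis using step(3) True by blast
    qed
  next
    assume "z \<in> Z"
    show "(c, x) \<in> (restrict (W - Z) F)\<^sup>*"
    proof (cases "y \<in> Z")
      case False
      then have "y = x" using closed yz \<open>z \<in> Z\<close> by blast
      then show ?thesis using step(3) False by blast
    qed (use step(3) in blast)
  qed
qed (use c in simp)

text \<open>A vertex set \<open>W\<close> of minimum size carrying an \<open>a\<close>-\<open>b\<close> path through \<open>W\<close> is an ear: by
  minimality every vertex lies on such a path, and a part of \<open>W\<close> hanging off a single vertex
  \<open>x\<close> could be cut away.\<close>
lemma minimal_ear:
  assumes finC: "finite C" and disj: "C \<inter> S = {}" and ab: "a \<in> S" "b \<in> S"
    and c: "c1 \<in> C" "c2 \<in> C" "(a, c1) \<in> F" "(c1, c2) \<in> (restrict C F)\<^sup>*" "(c2, b) \<in> F"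
  obtains W where "W \<subseteq> C" "ear F S a b W"
proof -
  define P where "P W \<longleftrightarrow> W \<subseteq> C \<and> (\<exists>d1\<in>W. \<exists>d2\<in>W.
    (a, d1) \<in> F \<and> (d1, d2) \<in> (restrict W F)\<^sup>* \<and> (d2, b) \<in> F)" for W
  have "P C" unfolding P_def using c by blast
  then obtain W where PW: "P W" and minW: "\<And>W'. P W' \<Longrightarrow> card W \<le> card W'"
    using ex_has_least_nat[of P C card] by blast
  have WC: "W \<subseteq> C" using PW unfolding P_def by blast
  have finW: "finite W" using WC finC finite_subset by blast
  obtain d1 d2 where d: "d1 \<in> W" "d2 \<in> W" "(a, d1) \<in> F" "(d1, d2) \<in> (restrict W F)\<^sup>*" "(d2, b) \<in> F"
    using PW unfolding P_def by blast
  have abW: "a \<notin> W" "b \<notin> W" using WC disj ab by blast+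
  define M where "M = {q \<in> W. (d1, q) \<in> (restrict W F)\<^sup>* \<and> (q, d2) \<in> (restrict W F)\<^sup>*}"
  have "P M"
    using rtrancl_restrict_between[OF d(4) rtrancl_refl] d WC unfolding P_def M_def by blast
  then have "card W \<le> card M" by (rule minW)
  moreover have "M \<subseteq> W" unfolding M_def by blast
  ultimately have MW: "M = W" using finW card_seteq by blast
  have paths: "\<forall>z\<in>W. (a, z) \<in> (restrict (insert a W) F)\<^sup>* \<and> (z, b) \<in> (restrict (insert b W) F)\<^sup>*"
  proof
    fix z assume "z \<in> W"
    then have z: "(d1, z) \<in> (restrict W F)\<^sup>*" "(z, d2) \<in> (restrict W F)\<^sup>*"
      using MW unfolding M_def by blast+
    have "(a, d1) \<in> restrict (insert a W) F" using d by (simp add: restrict_iff)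
    moreover have "(d1, z) \<in> (restrict (insert a W) F)\<^sup>*"
      using z(1) by (rule rtrancl_restrict_mono) auto
    moreover have "(d2, b) \<in> restrict (insert b W) F" using d by (simp add: restrict_iff)
    moreover have "(z, d2) \<in> (restrict (insert b W) F)\<^sup>*"
      using z(2) by (rule rtrancl_restrict_mono) auto
    ultimately show "(a, z) \<in> (restrict (insert a W) F)\<^sup>* \<and> (z, b) \<in> (restrict (insert b W) F)\<^sup>*"
      by (meson converse_rtrancl_into_rtrancl rtrancl.rtrancl_into_rtrancl)
  qed
  have attached: "\<exists>s\<in>S. (z, s) \<in> (und_adj (S \<union> W - {x}) F)\<^sup>*" if xz: "x \<in> W" "z \<in> W - {x}" for x z
  proof (rule ccontr)
    assume detached: "\<not> (\<exists>s\<in>S. (z, s) \<in> (und_adj (S \<union> W - {x}) F)\<^sup>*)"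
    define Z where "Z = und_component (W - {x}) F z"
    have Zsub: "Z \<subseteq> W - {x}" unfolding Z_def using xz(2) by (rule und_component_subset)
    have zZ: "z \<in> Z" unfolding Z_def und_component_def by simp
    have not_end: "d \<notin> Z" if "(a, d) \<in> F \<or> (d, b) \<in> F" for d
    proof
      assume "d \<in> Z"
      then have "(z, d) \<in> (und_adj (W - {x}) F)\<^sup>*" unfolding Z_def und_component_def by simp
      then have "(z, d) \<in> (und_adj (S \<union> W - {x}) F)\<^sup>*" by (rule rtrancl_und_adj_mono) auto
      moreover have "(d, a) \<in> und_adj (S \<union> W - {x}) F \<or> (d, b) \<in> und_adj (S \<union> W - {x}) F"
        using that \<open>d \<in> Z\<close> Zsub ab abW xz by (auto simp: und_adj_iff)
      ultimately show False using detached ab by (meson rtrancl.rtrancl_into_rtrancl)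
    qed
    have closed: "\<forall>y\<in>Z. \<forall>y'\<in>W - {x}. (y, y') \<in> F \<or> (y', y) \<in> F \<longrightarrow> y' \<in> Z"
    proof (intro ballI impI)
      fix y y' assume "y \<in> Z" "y' \<in> W - {x}" "(y, y') \<in> F \<or> (y', y) \<in> F"
      then show "y' \<in> Z" using Zsub unfolding Z_def by (meson subsetD und_component_closed)
    qed
    have "(d2 \<notin> Z \<longrightarrow> (d1, d2) \<in> (restrict (W - Z) F)\<^sup>*)
        \<and> (d2 \<in> Z \<longrightarrow> (d1, x) \<in> (restrict (W - Z) F)\<^sup>*)"
      by (rule rtrancl_restrict_bypass[OF Zsub \<open>x \<in> W\<close> closed _ d(4)]) (use d not_end in blast)
    then have "P (W - Z)" unfolding P_def using d not_end WC by blast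
    then have "card W \<le> card (W - Z)" by (rule minW)
    moreover have "card (W - Z) < card W"
      using zZ Zsub finW by (intro psubset_card_mono) auto
    ultimately show False by simp
  qed
  have "W \<noteq> {}" using d(1) by blast
  then have "ear F S a b W" using paths attached unfolding ear_def by blast
  with WC show thesis by (rule that)
qed

text \<open>The hypothesis on \<open>S\<close> is weaker than strong connectivity so that it also covers a single
  arc \<open>(b, a)\<close>, closed into a cycle by the ear.\<close>
lemma strongly_biconnected_Un_ear:
  assumes S: "und_biconnected S F" "\<forall>p\<in>S. (p, a) \<in> (restrict S F)\<^sup>* \<and> (b, p) \<in> (restrict S F)\<^sup>*"
    and ab: "a \<in> S" "b \<in> S" "a \<noteq> b"
    and C: "finite C" "C \<inter> S = {}"
    and c: "c1 \<in> C" "c2 \<in> C" "(a, c1) \<in> F" "(c1, c2) \<in> (restrict C F)\<^sup>*" "(c2, b) \<in> F"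
  obtains W where "W \<subseteq> C" "W \<noteq> {}" "strongly_biconnected (S \<union> W) F"
proof -
  obtain W where "W \<subseteq> C" and ear: "ear F S a b W"
    using minimal_ear[OF C ab(1,2) c] by blast
  then have W: "W \<subseteq> C" "W \<noteq> {}"
    and paths: "\<forall>z\<in>W. (a, z) \<in> (restrict (insert a W) F)\<^sup>* \<and> (z, b) \<in> (restrict (insert b W) F)\<^sup>*"
    unfolding ear_def by auto
  have disj: "S \<inter> W = {}" using W(1) C(2) by blast
  have in_T: "(p, q) \<in> (restrict (S \<union> W) F)\<^sup>*"
    if "(p, q) \<in> (restrict T F)\<^sup>*" "T \<subseteq> S \<union> W" for p q T
    using that by (rule rtrancl_restrict_mono) simp
  have a_to_W: "(a, z) \<in> (restrict (S \<union> W) F)\<^sup>*" and W_to_b: "(z, b) \<in> (restrict (S \<union> W) F)\<^sup>*"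
    if "z \<in> W" for z
    using paths that ab by (auto intro!: in_T)
  obtain z0 where "z0 \<in> W" using W(2) by blast
  have b_to_a: "(b, a) \<in> (restrict (S \<union> W) F)\<^sup>*" using S(2) ab(1) by (auto intro!: in_T)
  have "(p, a) \<in> (restrict (S \<union> W) F)\<^sup>* \<and> (a, p) \<in> (restrict (S \<union> W) F)\<^sup>*"
    if "p \<in> S \<union> W" for p
  proof (cases "p \<in> S")
    case True
    then have "(p, a) \<in> (restrict (S \<union> W) F)\<^sup>*" "(b, p) \<in> (restrict (S \<union> W) F)\<^sup>*"
      using S(2) by (auto intro!: in_T)
    then show ?thesis
      using a_to_W[OF \<open>z0 \<in> W\<close>] W_to_b[OF \<open>z0 \<in> W\<close>] by (meson rtrancl_trans)
  next
    case False
    then have "p \<in> W" using that by blast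
    then show ?thesis using a_to_W W_to_b b_to_a by (meson rtrancl_trans)
  qed
  then have "strongly_connected (S \<union> W) F" by (intro strongly_connected_hub) blast
  moreover have "und_biconnected (S \<union> W) F"
    by (rule und_biconnected_Un_ear[OF S(1) ab disj ear])
  ultimately show thesis using that W unfolding strongly_biconnected_def by blast
qed

lemma rtrancl_restrict_inner_path:
  assumes "(a, b) \<in> (restrict V F)\<^sup>*" "a \<in> V" "b \<in> V" "a \<noteq> b" "(a, b) \<notin> F"
  obtains c1 c2 where "c1 \<in> V - {a, b}" "c2 \<in> V - {a, b}" "(a, c1) \<in> F"
    "(c1, c2) \<in> (restrict (V - {a, b}) F)\<^sup>*" "(c2, b) \<in> F"
proof -
  obtain c2 b' where c2: "c2 \<in> V - {b}" "b' \<notin> V - {b}" "(c2, b') \<in> restrict V F"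
     "(a, c2) \<in> (restrict V F \<inter> (V - {b}) \<times> (V - {b}))\<^sup>*"
    using rtrancl_leaves_set[OF assms(1), of "V - {b}"] assms(2,4) by blast
  have c2b: "(c2, b) \<in> F" using c2(2,3) by (auto simp: restrict_iff)
  have "(a, c2) \<in> (restrict (V - {b}) F)\<^sup>*" using c2(4) restrict_Int_Times[of "V - {b}" V F] by simp
  then have "(c2, a) \<in> ((restrict (V - {b}) F)\<inverse>)\<^sup>*" by (rule rtrancl_converseI)
  moreover have c2V: "c2 \<in> V - {a, b}" using c2(1) c2b assms(5) by blast
  ultimately obtain c1 a' where c1: "c1 \<in> V - {a, b}" "a' \<notin> V - {a, b}"
      "(c1, a') \<in> (restrict (V - {b}) F)\<inverse>"
      "(c2, c1) \<in> ((restrict (V - {b}) F)\<inverse> \<inter> (V - {a, b}) \<times> (V - {a, b}))\<^sup>*"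
    using rtrancl_leaves_set[of c2 a _ "V - {a, b}"] assms(2) by blast
  have ac1: "(a, c1) \<in> F" using c1(2,3) by (auto simp: restrict_iff)
  have "(c2, c1) \<in> ((restrict (V - {b}) F \<inter> (V - {a, b}) \<times> (V - {a, b}))\<inverse>)\<^sup>*"
    using c1(4) by (simp add: converse_Int converse_Times)
  then have "(c1, c2) \<in> (restrict (V - {b}) F \<inter> (V - {a, b}) \<times> (V - {a, b}))\<^sup>*"
    by (rule rtrancl_converseD)
  moreover have "restrict (V - {b}) F \<inter> (V - {a, b}) \<times> (V - {a, b}) = restrict (V - {a, b}) F"
    by (rule restrict_Int_Times) blast
  ultimately have "(c1, c2) \<in> (restrict (V - {a, b}) F)\<^sup>*" by simp
  then show thesis using that c1(1) c2V c2b ac1 by blast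
qed

lemma strongly_biconnected_pair:
  assumes "(u, v) \<in> F" "(v, u) \<in> F" "u \<noteq> v"
  shows "strongly_biconnected {u, v} F"
proof -
  have "strongly_connected {u, v} F"
    using assms(1,2) by (intro strongly_connected_hub[where h = u]) (auto simp: restrict_iff)
  then show ?thesis
    using und_biconnected_pair[OF assms(1,3)] unfolding strongly_biconnected_def by blast
qed

lemma strongly_biconnected_through_arc:
  assumes "finite V" "strongly_connected V F" "(u, v) \<in> F" "u \<in> V" "v \<in> V" "u \<noteq> v"
  obtains S where "S \<subseteq> V" "u \<in> S" "v \<in> S" "strongly_biconnected S F"
proof (cases "(v, u) \<in> F")
  case True
  show thesis by (rule that[of "{u, v}"]) (use assms True strongly_biconnected_pair in auto)
next
  case False
  have "(v, u) \<in> (restrict V F)\<^sup>*" using assms(2,4,5) unfolding strongly_connected_def by blast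
  then obtain c1 c2 where c: "c1 \<in> V - {v, u}" "c2 \<in> V - {v, u}" "(v, c1) \<in> F"
    "(c1, c2) \<in> (restrict (V - {v, u}) F)\<^sup>*" "(c2, u) \<in> F"
    by (rule rtrancl_restrict_inner_path) (use assms(4-6) False in auto)
  have hub: "\<forall>p\<in>{u, v}. (p, v) \<in> (restrict {u, v} F)\<^sup>* \<and> (u, p) \<in> (restrict {u, v} F)\<^sup>*"
    using assms(3) by (auto simp: restrict_iff)
  have "finite (V - {v, u})" "(V - {v, u}) \<inter> {u, v} = {}" "v \<in> {u, v}" "u \<in> {u, v}" "v \<noteq> u"
    using assms(1,6) by auto
  then obtain W where W: "W \<subseteq> V - {v, u}" "strongly_biconnected ({u, v} \<union> W) F"
    using strongly_biconnected_Un_ear[OF und_biconnected_pair[OF assms(3,6)] hub _ _ _ _ _ c]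
    by metis
  show thesis by (rule that[of "{u, v} \<union> W"]) (use assms(4,5) W in auto)
qed

section \<open>Cut vertices between strongly biconnected components\<close>

lemma rtrancl_enters_set:
  assumes "(a, b) \<in> R\<^sup>*" "a \<notin> P" "b \<in> P"
  obtains y' y where "y' \<notin> P" "y \<in> P" "(y', y) \<in> R" "(y, b) \<in> (R \<inter> P \<times> P)\<^sup>*"
proof -
  have "(b, a) \<in> (R\<inverse>)\<^sup>*" using assms(1) by (rule rtrancl_converseI)
  then obtain y y' where "y \<in> P" "y' \<notin> P" "(y, y') \<in> R\<inverse>" "(b, y) \<in> (R\<inverse> \<inter> P \<times> P)\<^sup>*"
    using rtrancl_leaves_set[of b a "R\<inverse>" P] assms(2,3) by blast
  moreover have "R\<inverse> \<inter> P \<times> P = (R \<inter> P \<times> P)\<inverse>" by auto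
  ultimately show thesis using that by (auto simp: rtrancl_converse)
qed

definition entries :: "('a \<times> 'a) set \<Rightarrow> 'a set \<Rightarrow> 'a set \<Rightarrow> 'a \<Rightarrow> 'a set" where
  "entries F S C c = {s \<in> S. \<exists>c'\<in>C. (s, c') \<in> F \<and> (c', c) \<in> (restrict C F)\<^sup>*}"

definition exits :: "('a \<times> 'a) set \<Rightarrow> 'a set \<Rightarrow> 'a set \<Rightarrow> 'a \<Rightarrow> 'a set" where
  "exits F S C c = {s \<in> S. \<exists>c'\<in>C. (c, c') \<in> (restrict C F)\<^sup>* \<and> (c', s) \<in> F}"

lemma entries_exits_nonempty:
  assumes sc: "strongly_connected V F" and "s \<in> S" "S \<subseteq> V" "C \<subseteq> V - S" "c \<in> C"
    and closed: "\<forall>y\<in>C. \<forall>y'\<in>V - C. (y, y') \<in> F \<or> (y', y) \<in> F \<longrightarrow> y' \<in> S"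
  shows "entries F S C c \<noteq> {}" "exits F S C c \<noteq> {}"
proof -
  have sV: "s \<in> V" and cV: "c \<in> V" and sC: "s \<notin> C" using assms by auto
  have restrict_C: "restrict V F \<inter> C \<times> C = restrict C F"
    using assms(4) by (intro restrict_Int_Times) blast
  have "(s, c) \<in> (restrict V F)\<^sup>*" using sc sV cV unfolding strongly_connected_def by blast
  then obtain y' y where "y' \<notin> C" "y \<in> C" "(y', y) \<in> restrict V F"
      "(y, c) \<in> (restrict V F \<inter> C \<times> C)\<^sup>*"
    using sC \<open>c \<in> C\<close> by (rule rtrancl_enters_set)
  then have "y' \<in> entries F S C c"
    using closed restrict_C unfolding entries_def by (auto simp: restrict_iff)
  then show "entries F S C c \<noteq> {}" by blast
  have "(c, s) \<in> (restrict V F)\<^sup>*" using sc sV cV unfolding strongly_connected_def by blast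
  then obtain y y' where "y \<in> C" "y' \<notin> C" "(y, y') \<in> restrict V F"
      "(c, y) \<in> (restrict V F \<inter> C \<times> C)\<^sup>*"
    using \<open>c \<in> C\<close> sC by (rule rtrancl_leaves_set)
  then have "y' \<in> exits F S C c"
    using closed restrict_C unfolding exits_def by (auto simp: restrict_iff)
  then show "exits F S C c \<noteq> {}" by blast
qed

text \<open>Entries only grow along arcs inside \<open>C\<close>, so once they are singletons they are constant
  on the connected set \<open>C\<close>.\<close>
lemma common_attachment:
  assumes sc: "strongly_connected V F" and S: "S \<subseteq> V" "S \<noteq> {}" and w: "w \<in> V - S"
    and C: "C = und_component (V - S) F w"
    and no_ear: "\<forall>c\<in>C. \<forall>a\<in>entries F S C c. \<forall>b\<in>exits F S C c. a = b"
  obtains x where "x \<in> S" "\<forall>c\<in>C. entries F S C c = {x} \<and> exits F S C c = {x}"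
proof -
  have CV: "C \<subseteq> V - S" unfolding C using w by (rule und_component_subset)
  have closed: "\<forall>y\<in>C. \<forall>y'\<in>V - C. (y, y') \<in> F \<or> (y', y) \<in> F \<longrightarrow> y' \<in> S"
    using CV und_component_closed[of _ "V - S" F w] unfolding C by blast
  have single: "\<exists>x. entries F S C c = {x} \<and> exits F S C c = {x}" if "c \<in> C" for c
  proof -
    obtain s where "s \<in> S" using S(2) by blast
    then have "entries F S C c \<noteq> {}" "exits F S C c \<noteq> {}"
      using entries_exits_nonempty[OF sc _ S(1) CV that closed] by blast+
    then obtain a b where ab: "a \<in> entries F S C c" "b \<in> exits F S C c" by blast
    have "a' = b'" if "a' \<in> entries F S C c" "b' \<in> exits F S C c" for a' b'
      using no_ear \<open>c \<in> C\<close> that by blast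
    then have "entries F S C c = {a} \<and> exits F S C c = {a}"
      using ab by (metis equals0D insertCI subsetI subset_singletonD)
    then show ?thesis by blast
  qed
  have entries_mono: "entries F S C c \<subseteq> entries F S C c'"
    if "c \<in> C" "c' \<in> C" "(c, c') \<in> F" for c c'
  proof
    fix s assume "s \<in> entries F S C c"
    then obtain c'' where "s \<in> S" "c'' \<in> C" "(s, c'') \<in> F" "(c'', c) \<in> (restrict C F)\<^sup>*"
      unfolding entries_def by blast
    moreover have "(c, c') \<in> restrict C F" using that by (simp add: restrict_iff)
    ultimately show "s \<in> entries F S C c'"
      unfolding entries_def by (blast intro: rtrancl_into_rtrancl)
  qed
  have entries_const: "entries F S C c = entries F S C w" if "c \<in> C" for c
  proof -
    have "(w, c) \<in> (und_adj (V - S) F)\<^sup>*" using that unfolding C und_component_def by blast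
    then show ?thesis
    proof (induction rule: rtrancl_induct)
      case (step y z)
      have "y \<in> C" "z \<in> C" using step(1,2) unfolding C und_component_def
        by (auto intro: rtrancl_into_rtrancl)
      moreover have "(y, z) \<in> F \<or> (z, y) \<in> F" using step(2) by (simp add: und_adj_iff)
      ultimately have "entries F S C y \<subseteq> entries F S C z \<or> entries F S C z \<subseteq> entries F S C y"
        using entries_mono by blast
      moreover obtain x1 x2 where "entries F S C y = {x1}" "entries F S C z = {x2}"
        using single \<open>y \<in> C\<close> \<open>z \<in> C\<close> by meson
      ultimately have "entries F S C y = entries F S C z" by auto
      then show ?case using step(3) by simp
    qed simp
  qed
  have "w \<in> C" unfolding C und_component_def by simp
  then obtain x where x: "entries F S C w = {x}" using single by blast
  then have "x \<in> S" unfolding entries_def by blast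
  moreover have "entries F S C c = {x} \<and> exits F S C c = {x}" if c: "c \<in> C" for c
  proof -
    obtain y where "entries F S C c = {y}" "exits F S C c = {y}" using single[OF c] by blast
    then show ?thesis using entries_const[OF c] x by simp
  qed
  ultimately show thesis using that by blast
qed

text \<open>The ear runs through the component of \<open>w\<close> outside \<open>S\<close>, from an entry of one of its
  vertices to a different exit; if there is no such pair, the common attachment is the cut vertex.\<close>
lemma strongly_biconnected_ear_or_cut_vertex:
  assumes fin: "finite V" and sc: "strongly_connected V F" and S: "S \<subseteq> V" "S \<noteq> {}"
    and sb: "strongly_biconnected S F" and w: "w \<in> V - S"
  shows "(\<exists>W. W \<subseteq> V - S \<and> W \<noteq> {} \<and> strongly_biconnected (S \<union> W) F)
    \<or> (\<exists>x\<in>S. \<forall>t\<in>S. (w, t) \<notin> (und_adj (V - {x}) F)\<^sup>*)"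
proof -
  define C where "C = und_component (V - S) F w"
  have CV: "C \<subseteq> V - S" unfolding C_def using w by (rule und_component_subset)
  have closed: "\<forall>y\<in>C. \<forall>y'\<in>V - C. (y, y') \<in> F \<or> (y', y) \<in> F \<longrightarrow> y' \<in> S"
    using CV und_component_closed[of _ "V - S" F w] unfolding C_def by blast
  show ?thesis
  proof (cases "\<exists>c\<in>C. \<exists>a\<in>entries F S C c. \<exists>b\<in>exits F S C c. a \<noteq> b")
    case True
    then obtain c a b c1 c2 where "c \<in> C" "a \<in> S" "b \<in> S" "a \<noteq> b"
      and c: "c1 \<in> C" "(a, c1) \<in> F" "(c1, c) \<in> (restrict C F)\<^sup>*"
        "c2 \<in> C" "(c, c2) \<in> (restrict C F)\<^sup>*" "(c2, b) \<in> F"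
      unfolding entries_def exits_def by blast
    have hub: "\<forall>p\<in>S. (p, a) \<in> (restrict S F)\<^sup>* \<and> (b, p) \<in> (restrict S F)\<^sup>*"
      using sb \<open>a \<in> S\<close> \<open>b \<in> S\<close> unfolding strongly_biconnected_def strongly_connected_def by blast
    have ub: "und_biconnected S F" using sb unfolding strongly_biconnected_def by blast
    have "finite C" "C \<inter> S = {}" using CV fin finite_subset by auto
    moreover have "(c1, c2) \<in> (restrict C F)\<^sup>*" using c(3,5) by (rule rtrancl_trans)
    ultimately obtain W where "W \<subseteq> C" "W \<noteq> {}" "strongly_biconnected (S \<union> W) F"
      using strongly_biconnected_Un_ear[OF ub hub \<open>a \<in> S\<close> \<open>b \<in> S\<close> \<open>a \<noteq> b\<close> _ _ c(1,4,2)]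
        c(6) by metis
    then show ?thesis using CV by blast
  next
    case False
    then obtain x where "x \<in> S" and x: "\<forall>c\<in>C. entries F S C c = {x} \<and> exits F S C c = {x}"
      using common_attachment[OF sc S w C_def] by blast
    have stays: "t \<in> C" if "(w, t) \<in> (und_adj (V - {x}) F)\<^sup>*" for t
      using that
    proof (induction rule: rtrancl_induct)
      case base
      show ?case unfolding C_def und_component_def by simp
    next
      case (step y z)
      have arc: "(y, z) \<in> F \<or> (z, y) \<in> F" "z \<in> V" "z \<noteq> x" using step(2) by (auto simp: und_adj_iff)
      show ?case
      proof (rule ccontr)
        assume "z \<notin> C"
        then have "z \<in> S" using closed step(3) arc by blast
        then have "z \<in> exits F S C y \<or> z \<in> entries F S C y"
          using arc(1) step(3) unfolding entries_def exits_def by blast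
        then show False using x step(3) arc(3) by blast
      qed
    qed
    then have "\<forall>t\<in>S. (w, t) \<notin> (und_adj (V - {x}) F)\<^sup>*" using CV by blast
    then show ?thesis using \<open>x \<in> S\<close> by blast
  qed
qed

text \<open>Grow a maximal strongly biconnected subgraph around the last arc \<open>(u, v)\<close> of a path from
  \<open>w\<close> to \<open>v\<close>; if it missed \<open>w\<close>, the cut vertex provided by the previous lemma would separate \<open>w\<close>
  from \<open>v\<close> or, if it is \<open>v\<close> itself, from \<open>u\<close>.\<close>
lemma strongly_biconnected_if_no_cut_vertex:
  assumes fin: "finite V" and sc: "strongly_connected V F" and vw: "v \<in> V" "w \<in> V" "v \<noteq> w"
    and no_cut: "\<forall>x\<in>V - {v, w}. (v, w) \<in> (und_adj (V - {x}) F)\<^sup>*"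
  obtains S where "S \<subseteq> V" "v \<in> S" "w \<in> S" "strongly_biconnected S F"
proof -
  have "(w, v) \<in> (restrict V F)\<^sup>*" using sc vw unfolding strongly_connected_def by blast
  then obtain u v' where u: "u \<in> V - {v}" "v' \<notin> V - {v}" "(u, v') \<in> restrict V F"
    "(w, u) \<in> (restrict V F \<inter> (V - {v}) \<times> (V - {v}))\<^sup>*"
    using rtrancl_leaves_set[of w v _ "V - {v}"] vw by blast
  have uv: "(u, v) \<in> F" using u(2,3) by (auto simp: restrict_iff)
  have "(w, u) \<in> (restrict (V - {v}) F)\<^sup>*" using u(4) restrict_Int_Times[of "V - {v}" V F] by auto
  then have wu: "(w, u) \<in> (und_adj (V - {v}) F)\<^sup>*" by (rule rtrancl_restrict_und_adj) auto
  define candidates where "candidates = {S. S \<subseteq> V \<and> u \<in> S \<and> v \<in> S \<and> strongly_biconnected S F}"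
  have "candidates \<subseteq> Pow V" unfolding candidates_def by blast
  then have "finite candidates" using fin by (simp add: finite_subset)
  moreover obtain S0 where "S0 \<in> candidates"
    using strongly_biconnected_through_arc[OF fin sc uv] u(1) vw(1)
    unfolding candidates_def by blast
  ultimately obtain S where S: "S \<in> candidates" and maximal: "\<forall>S'\<in>candidates. S \<subseteq> S' \<longrightarrow> S = S'"
    using finite_has_maximal2[of candidates S0] by auto
  have SV: "S \<subseteq> V" and uS: "u \<in> S" and vS: "v \<in> S" and sb: "strongly_biconnected S F"
    using S unfolding candidates_def by auto
  have "w \<in> S"
  proof (rule ccontr)
    assume "w \<notin> S"
    then have "w \<in> V - S" "S \<noteq> {}" using vw(2) vS by auto
    from strongly_biconnected_ear_or_cut_vertex[OF fin sc SV \<open>S \<noteq> {}\<close> sb \<open>w \<in> V - S\<close>]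
    consider W where "W \<subseteq> V - S" "W \<noteq> {}" "strongly_biconnected (S \<union> W) F"
      | x where "x \<in> S" "\<forall>t\<in>S. (w, t) \<notin> (und_adj (V - {x}) F)\<^sup>*"
      by blast
    then show False
    proof cases
      case (1 W)
      then have "S \<union> W \<in> candidates" using S SV unfolding candidates_def by auto
      then have "S = S \<union> W" using maximal by blast
      then show False using 1(1,2) by blast
    next
      case (2 x)
      show False
      proof (cases "x = v")
        case True
        then show False using 2(2) uS wu by blast
      next
        case False
        then have "(v, w) \<in> (und_adj (V - {x}) F)\<^sup>*" using no_cut 2(1) SV \<open>w \<notin> S\<close> by blast
        then show False using 2(2) vS by (blast intro: rtrancl_und_adj_sym)
      qed
    qed
  qed
  then show thesis using that SV vS sb by blast
qed

lemma strongly_biconnected_Int_Times_iff: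
  "strongly_biconnected S (F \<inter> S \<times> S) \<longleftrightarrow> strongly_biconnected S F"
proof -
  have "restrict S (F \<inter> S \<times> S) = restrict S F"
    and "restrict (S - {x}) (F \<inter> S \<times> S) = restrict (S - {x}) F" for x
    unfolding restrict_def by auto
  then show ?thesis
    unfolding strongly_biconnected_def strongly_connected_def und_biconnected_def und_connected_def
    by (simp only:)
qed

lemma same_sbc_if_strongly_biconnected:
  assumes "finite V" "S \<subseteq> V" "v \<in> S" "w \<in> S" "strongly_biconnected S F"
  shows "same_sbc V F v w"
proof -
  define subgraphs where
    "subgraphs = {(S', A'). S' \<subseteq> V \<and> A' \<subseteq> F \<inter> S' \<times> S' \<and> strongly_biconnected S' A'}"
  have start: "(S, F \<inter> S \<times> S) \<in> subgraphs"
    using assms(2,5) strongly_biconnected_Int_Times_iff unfolding subgraphs_def by blast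
  have "subgraphs \<subseteq> Pow V \<times> Pow (V \<times> V)" unfolding subgraphs_def by auto
  then have fin: "finite subgraphs" using assms(1) by (simp add: finite_subset)
  obtain S' A' where max: "(S', A') \<in> subgraphs" "(S, F \<inter> S \<times> S) \<le> (S', A')"
    "\<forall>p\<in>subgraphs. (S', A') \<le> p \<longrightarrow> (S', A') = p"
    using finite_has_maximal2[OF fin start] by (metis surj_pair)
  have "sb_component V F S' A'"
    using max unfolding sb_component_def subgraphs_def by (auto simp: less_eq_prod_def)
  moreover have "S \<subseteq> S'" using max(2) by (simp add: less_eq_prod_def)
  ultimately show ?thesis unfolding same_sbc_def using assms(3,4) by blast
qed

lemma cut_vertex_if_not_same_sbc:
  assumes "finite V" "strongly_connected V F" "v \<in> V" "w \<in> V" "v \<noteq> w" "\<not> same_sbc V F v w"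
  shows "\<exists>x\<in>V - {v, w}. (v, w) \<notin> (und_adj (V - {x}) F)\<^sup>*"
  using strongly_biconnected_if_no_cut_vertex[OF assms(1-5)]
    same_sbc_if_strongly_biconnected[OF assms(1)] assms(6)
  by metis

section \<open>The deletion potential\<close>

definition num_components :: "'a set \<Rightarrow> ('a \<times> 'a) set \<Rightarrow> nat" where
  "num_components W F = card (und_component W F ` W)"

definition deletion_potential :: "'a set \<Rightarrow> ('a \<times> 'a) set \<Rightarrow> nat" where
  "deletion_potential V F = (\<Sum>x\<in>V. num_components (V - {x}) F)"

lemma und_component_eq_iff:
  "und_component W F z = und_component W F t \<longleftrightarrow> (z, t) \<in> (und_adj W F)\<^sup>*"
proof
  assume "und_component W F z = und_component W F t"
  moreover have "t \<in> und_component W F t" unfolding und_component_def by simp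
  ultimately have "t \<in> und_component W F z" by simp
  then show "(z, t) \<in> (und_adj W F)\<^sup>*" unfolding und_component_def by simp
next
  assume "(z, t) \<in> (und_adj W F)\<^sup>*"
  moreover have "(t, z) \<in> (und_adj W F)\<^sup>*" using calculation by (rule rtrancl_und_adj_sym)
  ultimately show "und_component W F z = und_component W F t"
    unfolding und_component_def by (auto intro: rtrancl_trans)
qed

lemma card_image_le_if_factors:
  assumes "finite A" and factors: "\<forall>a\<in>A. \<forall>b\<in>A. f a = f b \<longrightarrow> g a = g b"
  shows "card (g ` A) \<le> card (f ` A)"
    and "\<exists>a\<in>A. \<exists>b\<in>A. f a \<noteq> f b \<and> g a = g b \<Longrightarrow> card (g ` A) < card (f ` A)"
proof -
  define h where "h = g \<circ> inv_into A f"
  have h: "h (f a) = g a" if "a \<in> A" for a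
  proof -
    have "f a \<in> f ` A" using that by blast
    then have "inv_into A f (f a) \<in> A" "f (inv_into A f (f a)) = f a"
      by (rule inv_into_into, rule f_inv_into_f)
    then have "g (inv_into A f (f a)) = g a" using factors that by blast
    then show ?thesis unfolding h_def by simp
  qed
  then have img: "g ` A = h ` f ` A" by (simp add: image_image)
  show "card (g ` A) \<le> card (f ` A)" unfolding img using assms(1) by (intro card_image_le) simp
  assume "\<exists>a\<in>A. \<exists>b\<in>A. f a \<noteq> f b \<and> g a = g b"
  then obtain a b where "a \<in> A" "b \<in> A" "f a \<noteq> f b" "h (f a) = h (f b)" using h by metis
  then have "\<not> inj_on h (f ` A)" unfolding inj_on_def by blast
  then have "card (h ` f ` A) \<noteq> card (f ` A)" using assms(1) by (simp add: inj_on_iff_eq_card)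
  then show "card (g ` A) < card (f ` A)"
    unfolding img using assms(1) card_image_le[of "f ` A" h] by simp
qed

lemma num_components_antimono:
  assumes "finite W" "F \<subseteq> F'"
  shows "num_components W F' \<le> num_components W F"
  unfolding num_components_def
proof (rule card_image_le_if_factors(1)[OF assms(1)], intro ballI impI)
  fix a b assume "und_component W F a = und_component W F b"
  then show "und_component W F' a = und_component W F' b"
    unfolding und_component_eq_iff by (rule rtrancl_und_adj_mono) (use assms(2) in auto)
qed

lemma num_components_insert_less:
  assumes "finite W" "v \<in> W" "w \<in> W" "(v, w) \<notin> (und_adj W F)\<^sup>*"
  shows "num_components W (insert (v, w) F) < num_components W F"
  unfolding num_components_def
proof (rule card_image_le_if_factors(2)[OF assms(1)])
  show "\<forall>a\<in>W. \<forall>b\<in>W. und_component W F a = und_component W F b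
      \<longrightarrow> und_component W (insert (v, w) F) a = und_component W (insert (v, w) F) b"
    unfolding und_component_eq_iff
    by (intro ballI impI, erule rtrancl_und_adj_mono) auto
  have "(v, w) \<in> (und_adj W (insert (v, w) F))\<^sup>*" using assms(2,3) by (auto simp: und_adj_iff)
  then show "\<exists>a\<in>W. \<exists>b\<in>W. und_component W F a \<noteq> und_component W F b
      \<and> und_component W (insert (v, w) F) a = und_component W (insert (v, w) F) b"
    using assms(2-4) unfolding und_component_eq_iff by blast
qed

lemma deletion_potential_insert_less:
  assumes "finite V" "x \<in> V - {v, w}" "v \<in> V" "w \<in> V" "(v, w) \<notin> (und_adj (V - {x}) F)\<^sup>*"
  shows "deletion_potential V (insert (v, w) F) < deletion_potential V F"
  unfolding deletion_potential_def
proof (rule sum_strict_mono_ex1[OF assms(1)])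
  show "\<forall>y\<in>V. num_components (V - {y}) (insert (v, w) F) \<le> num_components (V - {y}) F"
    using assms(1) by (auto intro: num_components_antimono)
  have "num_components (V - {x}) (insert (v, w) F) < num_components (V - {x}) F"
    using assms by (intro num_components_insert_less) auto
  then show "\<exists>y\<in>V. num_components (V - {y}) (insert (v, w) F) < num_components (V - {y}) F"
    using assms(2) by blast
qed

lemma card_le_deletion_potential:
  assumes "finite V" "2 \<le> card V"
  shows "card V \<le> deletion_potential V F"
proof -
  have "1 \<le> num_components (V - {x}) F" if "x \<in> V" for x
  proof -
    have "\<not> V \<subseteq> {x}"
    proof
      assume "V \<subseteq> {x}"
      then have "card V \<le> 1" using card_mono[of "{x}" V] by simp
      then show False using assms(2) by simp
    qed
    then have "V - {x} \<noteq> {}" by blast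
    then show ?thesis
      using assms(1) unfolding num_components_def by (simp add: Suc_leI card_gt_0_iff)
  qed
  then have "(\<Sum>x\<in>V. 1) \<le> deletion_potential V F" unfolding deletion_potential_def by (rule sum_mono)
  then show ?thesis by simp
qed

lemma bfs_parent_map:
  assumes "und_connected V F" "r \<in> V"
  obtains p and d :: "'a \<Rightarrow> nat" where "\<forall>z\<in>V - {r}. (p z, z) \<in> und_adj V F \<and> d (p z) < d z"
proof -
  let ?R = "und_adj V F"
  define d where "d z = (LEAST k. (r, z) \<in> ?R ^^ k)" for z
  have "\<exists>y. (y, z) \<in> ?R \<and> d y < d z" if z: "z \<in> V - {r}" for z
  proof -
    have "\<exists>k. (r, z) \<in> ?R ^^ k"
      using assms z unfolding und_connected_und_adj by (blast dest: rtrancl_imp_relpow)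
    then have "(r, z) \<in> ?R ^^ d z" unfolding d_def by (rule LeastI_ex)
    moreover have "d z \<noteq> 0"
    proof
      assume "d z = 0"
      with calculation have "z = r" by simp
      with z show False by simp
    qed
    then have "d z = Suc (d z - 1)" by simp
    ultimately have "(r, z) \<in> ?R ^^ Suc (d z - 1)" by metis
    then obtain y where y: "(r, y) \<in> ?R ^^ (d z - 1)" "(y, z) \<in> ?R" by (rule relpow_Suc_E)
    have "d y \<le> d z - 1" using y(1) unfolding d_def by (rule Least_le)
    then show ?thesis using y(2) \<open>d z \<noteq> 0\<close> by (intro exI[of _ y]) simp
  qed
  then obtain p where "\<forall>z\<in>V - {r}. (p z, z) \<in> ?R \<and> d (p z) < d z" by metis
  then show thesis by (rule that)
qed

text \<open>Deleting \<open>x\<close> from a connected graph leaves a vertex of every component among the children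
  of \<open>x\<close> in a BFS tree and the root: follow parents from any vertex until reaching one of them.\<close>
lemma num_components_delete_le:
  assumes fin: "finite V" and r: "r \<in> V"
    and parent: "\<forall>z\<in>V - {r}. (p z, z) \<in> und_adj V F \<and> d (p z) < (d z :: nat)"
  shows "num_components (V - {x}) F \<le> card {y \<in> V - {r}. p y = x} + 1"
proof -
  define T where "T = insert r {y \<in> V - {r}. p y = x}"
  have to_T: "\<exists>t\<in>T. (z, t) \<in> (und_adj (V - {x}) F)\<^sup>*" if "z \<in> V - {x}" for z
    using that
  proof (induction "d z" arbitrary: z rule: less_induct)
    case less
    show ?case
    proof (cases "z = r \<or> p z = x")
      case True
      then show ?thesis using less.prems unfolding T_def by blast
    next
      case False
      then have z: "z \<in> V - {r}" "p z \<noteq> x" using less.prems by auto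
      then have "(p z, z) \<in> und_adj V F" "d (p z) < d z" using parent by auto
      then have "(z, p z) \<in> und_adj (V - {x}) F" "p z \<in> V - {x}"
        using z less.prems by (auto simp: und_adj_iff)
      moreover obtain t where "t \<in> T" "(p z, t) \<in> (und_adj (V - {x}) F)\<^sup>*"
        using less.hyps[OF \<open>d (p z) < d z\<close> \<open>p z \<in> V - {x}\<close>] by blast
      ultimately show ?thesis by (meson converse_rtrancl_into_rtrancl)
    qed
  qed
  have "und_component (V - {x}) F ` (V - {x}) \<subseteq> und_component (V - {x}) F ` T"
  proof
    fix K assume "K \<in> und_component (V - {x}) F ` (V - {x})"
    then obtain z where "z \<in> V - {x}" and K: "K = und_component (V - {x}) F z" by blast
    then obtain t where "t \<in> T" "(z, t) \<in> (und_adj (V - {x}) F)\<^sup>*" using to_T by blast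
    then have "K = und_component (V - {x}) F t" unfolding K by (simp add: und_component_eq_iff)
    then show "K \<in> und_component (V - {x}) F ` T" using \<open>t \<in> T\<close> by blast
  qed
  moreover have "finite T" using fin unfolding T_def by simp
  ultimately have "num_components (V - {x}) F \<le> card T"
    unfolding num_components_def by (meson card_image_le card_mono finite_imageI le_trans)
  also have "\<dots> \<le> card {y \<in> V - {r}. p y = x} + 1"
    unfolding T_def using fin by (simp add: card_insert_if)
  finally show ?thesis .
qed

lemma deletion_potential_le:
  assumes fin: "finite V" and conn: "und_connected V F" and r: "r \<in> V"
  shows "deletion_potential V F + 1 \<le> 2 * card V"
proof -
  obtain p and d :: "'a \<Rightarrow> nat" where parent: "\<forall>z\<in>V - {r}. (p z, z) \<in> und_adj V F \<and> d (p z) < d z"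
    using bfs_parent_map[OF conn r] by blast
  have pV: "p z \<in> V" if "z \<in> V - {r}" for z using parent that by (auto simp: und_adj_iff)
  have "deletion_potential V F \<le> (\<Sum>x\<in>V. card {y \<in> V - {r}. p y = x} + 1)"
    unfolding deletion_potential_def
    using num_components_delete_le[OF fin r parent] by (intro sum_mono) auto
  also have "\<dots> = (\<Sum>x\<in>V. card {y \<in> V - {r}. p y = x}) + card V"
    by (subst sum.distrib) simp
  also have "(\<Sum>x\<in>V. card {y \<in> V - {r}. p y = x}) = card (V - {r})"
  proof -
    have "(\<Sum>x\<in>V. \<Sum>y\<in>{y \<in> V - {r}. p y = x}. 1) = (\<Sum>y\<in>V - {r}. 1::nat)"
      by (rule sum.group) (use fin pV in auto)
    then show ?thesis by simp
  qed
  also have "card (V - {r}) + card V + 1 = 2 * card V"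
    using card_Suc_Diff1[OF fin r] by linarith
  finally show ?thesis by simp
qed

section \<open>Algorithm A\<close>

lemma aug_loop_subset: "aug_loop V E B X Y \<Longrightarrow> X \<subseteq> Y \<and> Y \<subseteq> X \<union> E"
  by (induction rule: aug_loop.induct) auto

lemma step4_subset: "step4 V E ts X Z \<Longrightarrow> X \<subseteq> Z \<and> Z \<subseteq> X \<union> E"
  by (induction rule: step4.induct) (use aug_loop_subset in fastforce)+

lemma aug_loop_stop: "aug_loop V E {} X Y \<Longrightarrow> und_biconnected V X \<Longrightarrow> Y = X"
  by (cases rule: aug_loop.cases) auto

lemma aug_loop_potential:
  assumes "aug_loop V E {t} X Y" "finite V" "E \<subseteq> V \<times> V" "\<forall>v. (v, v) \<notin> E"
    and "finite X" "t \<in> X" "strongly_connected V (X - {t})"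
  shows "card Y + deletion_potential V (Y - {t}) \<le> card X + deletion_potential V (X - {t})"
  using assms
proof (induction rule: aug_loop.induct)
  case (extend X v w Y)
  have vw: "(v, w) \<in> E" "(v, w) \<notin> X" using extend.hyps(2) by auto
  then have "v \<in> V" "w \<in> V" "v \<noteq> w" "(v, w) \<noteq> t" using extend.prems by auto
  have X': "insert (v, w) X - {t} = insert (v, w) (X - {t})" using \<open>(v, w) \<noteq> t\<close> by auto
  have "strongly_connected V (insert (v, w) X - {t})"
    using extend.prems(6) by (rule strongly_connected_mono) blast
  then have IH: "card Y + deletion_potential V (Y - {t})
      \<le> card (insert (v, w) X) + deletion_potential V (insert (v, w) X - {t})"
    using extend.IH extend.prems by simp
  obtain x where x: "x \<in> V - {v, w}" "(v, w) \<notin> (und_adj (V - {x}) (X - {t}))\<^sup>*"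
    using cut_vertex_if_not_same_sbc[OF extend.prems(1,6) \<open>v \<in> V\<close> \<open>w \<in> V\<close> \<open>v \<noteq> w\<close>] extend.hyps(3)
    by auto
  have "deletion_potential V (insert (v, w) X - {t}) < deletion_potential V (X - {t})"
    unfolding X' using extend.prems(1) x(1) \<open>v \<in> V\<close> \<open>w \<in> V\<close> x(2)
    by (rule deletion_potential_insert_less)
  then show ?case using IH vw extend.prems(4) by simp
qed simp

lemma aug_loop_card_le:
  assumes "aug_loop V E {t} X Y" "finite V" "E \<subseteq> V \<times> V" "\<forall>v. (v, v) \<notin> E" "2 \<le> card V"
    and "finite X" "t \<in> X" "strongly_connected V (X - {t})"
  shows "card Y \<le> card X + (card V - 1)"
proof -
  obtain r where "r \<in> V" using assms(5) by fastforce
  have "deletion_potential V (X - {t}) + 1 \<le> 2 * card V"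
    using assms(2,8) \<open>r \<in> V\<close> by (intro deletion_potential_le strongly_connected_imp_und_connected)
  moreover have "card V \<le> deletion_potential V (Y - {t})"
    using assms(2,5) by (rule card_le_deletion_potential)
  ultimately show ?thesis using aug_loop_potential[OF assms(1-4,6-8)] by linarith
qed

lemma step4_card_le:
  assumes "step4 V E ts X Z" "finite V" "E \<subseteq> V \<times> V" "\<forall>v. (v, v) \<notin> E" "2 \<le> card V"
    and "finite X" "set ts \<subseteq> X" "two_edge_connected V X"
  shows "card Z \<le> card X + length ts * (card V - 1)"
  using assms
proof (induction rule: step4.induct)
  case (cons4 t X Y ts Z)
  have XY: "X \<subseteq> Y" "Y \<subseteq> X \<union> E" using aug_loop_subset[OF cons4.hyps(1)] by auto
  have "finite E" using cons4.prems(1,2) finite_subset by blast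
  then have "finite Y" using XY cons4.prems(5) finite_subset by blast
  have "card Y \<le> card X + (card V - 1)"
    using cons4.hyps(1) cons4.prems(1-5)
      two_edge_connected_strongly_connected_Diff[OF cons4.prems(7)] cons4.prems(6)
    by (intro aug_loop_card_le) auto
  moreover have "set ts \<subseteq> Y" "two_edge_connected V Y"
    using cons4.prems(6,7) XY two_edge_connected_mono by auto
  then have "card Z \<le> card Y + length ts * (card V - 1)"
    using cons4.IH cons4.prems(1-4) \<open>finite Y\<close> by blast
  ultimately show ?case by simp
qed simp

lemma card_le_card_times_pred:
  assumes "finite V" "E \<subseteq> V \<times> V" "\<forall>v. (v, v) \<notin> E"
  shows "card E \<le> card V * (card V - 1)"
proof -
  have "E \<subseteq> (\<Union>v\<in>V. {v} \<times> (V - {v}))" using assms(2,3) by auto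
  then have "card E \<le> card (\<Union>v\<in>V. {v} \<times> (V - {v}))"
    using assms(1) by (intro card_mono) auto
  also have "\<dots> \<le> (\<Sum>v\<in>V. card ({v} \<times> (V - {v})))" using assms(1) by (rule card_UN_le)
  also have "\<dots> = card V * (card V - 1)"
    using assms(1) by (simp add: card_cartesian_product card_Diff_singleton)
  finally show ?thesis .
qed

lemma card_le_card_strongly_connected:
  assumes "finite U" "strongly_connected V U" "2 \<le> card V"
  shows "card V \<le> card U"
proof -
  have "V \<subseteq> fst ` U"
  proof
    fix v assume "v \<in> V"
    have "\<not> V \<subseteq> {v}"
    proof
      assume "V \<subseteq> {v}"
      then have "card V \<le> 1" using card_mono[of "{v}" V] by simp
      then show False using assms(3) by simp
    qed
    then obtain b where "b \<in> V - {v}" by blast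
    then obtain e where "e \<in> U" "fst e \<in> {v}"
      using strongly_connected_arc_out[OF assms(2) _ _ \<open>b \<in> V - {v}\<close>] \<open>v \<in> V\<close> by blast
    then show "v \<in> fst ` U" by force
  qed
  then have "card V \<le> card (fst ` U)" using assms(1) by (intro card_mono) auto
  also have "\<dots> \<le> card U" using assms(1) by (rule card_image_le)
  finally show ?thesis .
qed

lemma b_bridges_if_not_und_biconnected:
  assumes "\<not> und_biconnected V U"
  shows "b_bridges V U = U"
  using assms und_biconnected_mono[of V "U - {e}" U for e]
  unfolding b_bridges_def strongly_biconnected_def by blast

lemma card_algA_output_le_if_und_biconnected:
  assumes "aug_loop V E {} U X" "distinct ts" "set ts = b_bridges V X" "step4 V E ts X Out"
    and "und_biconnected V U" "finite V" "E \<subseteq> V \<times> V" "\<forall>v. (v, v) \<notin> E" "2 \<le> card V"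
    and "finite U" "two_edge_connected V U"
  shows "card Out \<le> card U + card (b_bridges V U) * (card V - 1)"
proof -
  have "X = U" using aug_loop_stop[OF assms(1,5)] .
  then have "set ts \<subseteq> U" "length ts = card (b_bridges V U)"
    using assms(2,3) distinct_card[of ts] unfolding b_bridges_def by auto
  moreover have "card Out \<le> card U + length ts * (card V - 1)"
    using step4_card_le[OF _ assms(6-9,10) _ assms(11)] assms(4) \<open>X = U\<close> \<open>set ts \<subseteq> U\<close> by simp
  ultimately show ?thesis by simp
qed

lemma card_algA_output_le_if_not_und_biconnected:
  assumes "aug_loop V E {} U X" "step4 V E ts X Out"
    and "\<not> und_biconnected V U" "finite V" "E \<subseteq> V \<times> V" "\<forall>v. (v, v) \<notin> E" "2 \<le> card V"
    and "U \<subseteq> E" "strongly_connected V U"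
  shows "card Out \<le> card (b_bridges V U) * (card V - 1)"
proof -
  have "Out \<subseteq> E" using aug_loop_subset[OF assms(1)] step4_subset[OF assms(2)] assms(8) by blast
  moreover have "finite E" using assms(4,5) finite_subset[of E "V \<times> V"] by blast
  ultimately have "card Out \<le> card E" by (simp add: card_mono)
  also have "\<dots> \<le> card V * (card V - 1)" using assms(4-6) by (rule card_le_card_times_pred)
  also have "\<dots> \<le> card U * (card V - 1)"
    using card_le_card_strongly_connected[OF _ assms(9,7)] \<open>finite E\<close> assms(8)
    by (simp add: finite_subset)
  finally show ?thesis using b_bridges_if_not_und_biconnected[OF assms(3)] by simp
qed

theorem mainTheorem4:
  fixes V :: "'a set" and E U Out :: "('a \<times> 'a) set"
  assumes "finite V"
    and "E \<subseteq> V \<times> V"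
    and "\<forall>v. (v, v) \<notin> E"
    and "two_edge_strongly_biconnected V E"
    and "min_2ec_spanning V E U"
    and "algA_output V E U Out"
  shows "card Out \<le> card (b_bridges V U) * (card V - 1) + 5 * card V"
proof -
  have n: "3 \<le> card V" using assms(4) unfolding two_edge_strongly_biconnected_def by simp
  have UE: "U \<subseteq> E" and tec: "two_edge_connected V U"
    using assms(5) unfolding min_2ec_spanning_def by auto
  have UV: "U \<subseteq> V \<times> V" and finU: "finite U"
    using UE assms(1,2) finite_subset[of U "V \<times> V"] by auto
  obtain r where "r \<in> V" using n by fastforce
  have mader: "card U \<le> 4 * (card V - 1)"
    by (rule card_min_2ec_spanning_le[OF assms(5) UV assms(1) \<open>r \<in> V\<close>])
  consider "Out = U"
    | X ts where "aug_loop V E {} U X" "distinct ts" "set ts = b_bridges V X" "step4 V E ts X Out"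
    using assms(6) unfolding algA_output_def by blast
  then show ?thesis
  proof cases
    case (2 X ts)
    have "2 \<le> card V" "strongly_connected V U" using n tec unfolding two_edge_connected_def by auto
    then show ?thesis
      using card_algA_output_le_if_und_biconnected[OF 2 _ assms(1-3) _ finU tec]
        card_algA_output_le_if_not_und_biconnected[OF 2(1,4) _ assms(1-3) _ UE] mader
      by (cases "und_biconnected V U") auto
  qed (use mader in simp)
qed

end
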